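(* Let $s>0$. For all $\tau>0$, $$2\pi\Big(1+\frac{4s^2}{\tau^2}\Big)^{1/2}\le\sup_{\xi\in\mathbb R^3}\mu_s*\mu_s(\xi,\tau)\le2\pi\Big(1+\frac{2s}{\tau}\Big).$$ In particular $\lim_{\tau\to\infty}\sup_{\xi\in\mathbb R^3}\mu_s*\mu_s(\xi,\tau)=2\pi$.
   Context: For $s>0$, $\mu_s$ is the measure on $\mathbb R^4$ with $\int g\,d\mu_s=\int_{|y|>s}g(y,\sqrt{|y|^2-s^2})\frac{dy}{\sqrt{|y|^2-s^2}}$, and $\mu_s*\mu_s$ is its self-convolution, identified with its (Lebesgue) density on $\mathbb R^4$, which for $\tau\ge0$ is given by the explicit formula $\mu_s*\mu_s(\xi,\tau)=\frac{2\pi}{|\xi|}\big(|\xi|(1+\frac{4s^2}{\tau^2-|\xi|^2})^{1/2}\mathbb 1_{\{|\xi|<\sqrt{\tau^2+s^2}-s\}}+\tau\mathbb 1_{\{\sqrt{\tau^2+s^2}-s\le|\xi|\le\sqrt{\tau^2+4s^2}\}}+(\tau-|\xi|(1+\frac{4s^2}{\tau^2-|\xi|^2})^{1/2})\mathbb 1_{\{\sqrt{\tau^2+4s^2}<|\xi|\le\sqrt{\tau^2+s^2}+s\}}\big)$, with value $2\pi(1+4s^2/\tau^2)^{1/2}$ at $\xi=0$. *)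

theory Defs
  imports "HOL-Analysis.Analysis"
begin

text \<open>The density of the self-convolution \<mu>_s * \<mu>_s on R^4 = R^3 x R, at points
  (xi, tau) with tau \<ge> 0, given by the explicit formula of the paper
  (the paper identifies the measure \<mu>_s * \<mu>_s with this density).\<close>
definition mu_conv :: "real \<Rightarrow> real^3 \<Rightarrow> real \<Rightarrow> real" where
  "mu_conv s \<xi> \<tau> =
    (if \<xi> = 0 then 2 * pi * sqrt (1 + 4 * s\<^sup>2 / \<tau>\<^sup>2)
     else (2 * pi / norm \<xi>) *
       ((if norm \<xi> < sqrt (\<tau>\<^sup>2 + s\<^sup>2) - s
         then norm \<xi> * sqrt (1 + 4 * s\<^sup>2 / (\<tau>\<^sup>2 - (norm \<xi>)\<^sup>2)) else 0)
      + (if sqrt (\<tau>\<^sup>2 + s\<^sup>2) - s \<le> norm \<xi> \<and> norm \<xi> \<le> sqrt (\<tau>\<^sup>2 + 4 * s\<^sup>2)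
         then \<tau> else 0)
      + (if sqrt (\<tau>\<^sup>2 + 4 * s\<^sup>2) < norm \<xi> \<and> norm \<xi> \<le> sqrt (\<tau>\<^sup>2 + s\<^sup>2) + s
         then \<tau> - norm \<xi> * sqrt (1 + 4 * s\<^sup>2 / (\<tau>\<^sup>2 - (norm \<xi>)\<^sup>2)) else 0)))"

end

theory Submission
  imports Defs "HOL-Real_Asymp.Real_Asymp"
begin

text \<open>The lower bound is the value at \<xi> = 0. For the upper bound write r = |\<xi>| and treat the
  three regions of the formula separately. In the inner region (r + s)^2 < \<tau>^2 + s^2 gives
  s r^2 \<le> \<tau> (\<tau>^2 - r^2), which is exactly what is needed to compare the square root with
  1 + 2s/\<tau>; in the middle region the density is 2\<pi> \<tau>/r and r^2 + 2rs \<ge> \<tau>^2 bounds \<tau>/r;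
  in the outer region r > \<tau> and the density is at most 2\<pi> \<tau>/r < 2\<pi>. Both bounds tend to 2\<pi>.\<close>

lemma inner_region_sqrt_le:
  fixes s t r :: real
  assumes "s > 0" "t > 0" "0 \<le> r" "r < sqrt (t\<^sup>2 + s\<^sup>2) - s"
  shows "sqrt (1 + 4 * s\<^sup>2 / (t\<^sup>2 - r\<^sup>2)) \<le> 1 + 2 * s / t"
proof -
  have "(r + s)\<^sup>2 < (sqrt (t\<^sup>2 + s\<^sup>2))\<^sup>2"
    using assms by (intro power_strict_mono) auto
  then have gap: "2 * r * s < t\<^sup>2 - r\<^sup>2"
    by (simp add: power2_eq_square algebra_simps)
  then have "r < t"
    using assms by (smt (verit) mult_nonneg_nonneg power2_less_imp_less)
  have "s * r\<^sup>2 = r * (r * s)"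
    by (simp add: power2_eq_square)
  also have "\<dots> \<le> (2 * t) * (r * s)"
    using \<open>r < t\<close> assms by (intro mult_right_mono) auto
  also have "\<dots> = t * (2 * r * s)"
    by simp
  also have "\<dots> \<le> t * (t\<^sup>2 - r\<^sup>2)"
    using gap assms by (simp add: mult_left_mono)
  finally have key: "s * r\<^sup>2 \<le> t * (t\<^sup>2 - r\<^sup>2)" .
  have pos: "t\<^sup>2 - r\<^sup>2 > 0"
    using gap assms by (smt (verit) mult_nonneg_nonneg)
  have "4 * s\<^sup>2 * t\<^sup>2 \<le> (4 * s * t + 4 * s\<^sup>2) * (t\<^sup>2 - r\<^sup>2)"
    using key assms mult_left_mono[OF key, of "4 * s"]
    by (simp add: power2_eq_square algebra_simps)
  then have "1 + 4 * s\<^sup>2 / (t\<^sup>2 - r\<^sup>2) \<le> (1 + 2 * s / t)\<^sup>2"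
    using pos assms by (simp add: field_simps power2_eq_square)
  then show ?thesis
    using assms by (intro real_le_lsqrt) auto
qed

lemma middle_region_ratio_le:
  fixes s t r :: real
  assumes "s \<ge> 0" "t > 0" "r > 0" "sqrt (t\<^sup>2 + s\<^sup>2) - s \<le> r"
  shows "t / r \<le> 1 + 2 * s / t"
proof (cases "t \<le> r")
  case True
  then show ?thesis
    using assms by (simp add: add_increasing2)
next
  case False
  have "t\<^sup>2 + s\<^sup>2 \<le> (r + s)\<^sup>2"
    using assms by (simp add: sqrt_le_D)
  then have "t * t \<le> r * r + 2 * r * s"
    by (simp add: power2_eq_square algebra_simps)
  also have "\<dots> \<le> r * (t + 2 * s)"
    using False assms by (simp add: algebra_simps)
  finally show ?thesis
    using assms by (simp add: field_simps)
qed

lemma outer_region_term_le: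
  fixes s t r :: real
  assumes "t > 0" "sqrt (t\<^sup>2 + 4 * s\<^sup>2) < r"
  shows "t - r * sqrt (1 + 4 * s\<^sup>2 / (t\<^sup>2 - r\<^sup>2)) \<le> r"
proof -
  have "t < r"
    using assms real_sqrt_le_mono[of "t\<^sup>2" "t\<^sup>2 + 4 * s\<^sup>2"] by simp
  have "(sqrt (t\<^sup>2 + 4 * s\<^sup>2))\<^sup>2 < r\<^sup>2"
    using assms by (intro power_strict_mono) auto
  then have neg: "t\<^sup>2 - r\<^sup>2 + 4 * s\<^sup>2 < 0"
    by simp
  \<comment> \<open>HOL's sqrt is odd on negative arguments, so the radicand's sign matters here\<close>
  then have "1 + 4 * s\<^sup>2 / (t\<^sup>2 - r\<^sup>2) = (t\<^sup>2 - r\<^sup>2 + 4 * s\<^sup>2) / (t\<^sup>2 - r\<^sup>2)"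
    by (smt (verit) add_divide_distrib zero_le_power2 divide_self)
  also have "\<dots> \<ge> 0"
    using neg by (smt (verit) divide_nonpos_neg zero_le_power2)
  finally have "0 \<le> r * sqrt (1 + 4 * s\<^sup>2 / (t\<^sup>2 - r\<^sup>2))"
    using \<open>t < r\<close> assms by simp
  then show ?thesis
    using \<open>t < r\<close> by linarith
qed

lemma mu_conv_le:
  fixes s t :: real and \<xi> :: "real^3"
  assumes "s > 0" "t > 0"
  shows "mu_conv s \<xi> t \<le> 2 * pi * (1 + 2 * s / t)"
proof (cases "\<xi> = 0")
  case True
  have "0 < sqrt (t\<^sup>2 + s\<^sup>2) - s"
    using assms by (simp add: real_less_rsqrt)
  then show ?thesis
    using True inner_region_sqrt_le[OF assms order_refl] by (simp add: mu_conv_def)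
next
  case False
  define r where "r = norm \<xi>"
  define A where "A = sqrt (t\<^sup>2 + s\<^sup>2) - s"
  define B where "B = sqrt (t\<^sup>2 + 4 * s\<^sup>2)"
  define C where "C = sqrt (t\<^sup>2 + s\<^sup>2) + s"
  have "r > 0"
    using False by (simp add: r_def)
  have "sqrt (t\<^sup>2 + s\<^sup>2) \<le> B"
    unfolding B_def by (simp add: real_sqrt_le_mono)
  then have "A < B"
    using assms by (simp add: A_def)
  have val: "mu_conv s \<xi> t = (2 * pi / r) *
       ((if r < A then r * sqrt (1 + 4 * s\<^sup>2 / (t\<^sup>2 - r\<^sup>2)) else 0)
      + (if A \<le> r \<and> r \<le> B then t else 0)
      + (if B < r \<and> r \<le> C then t - r * sqrt (1 + 4 * s\<^sup>2 / (t\<^sup>2 - r\<^sup>2)) else 0))"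
    using False by (simp add: mu_conv_def r_def A_def B_def C_def)
  have "0 \<le> 2 * pi * (1 + 2 * s / t)"
    using assms by simp
  consider "r < A" | "A \<le> r \<and> r \<le> B" | "B < r \<and> r \<le> C" | "\<not> r < A" "\<not> r \<le> B" "\<not> r \<le> C"
    by linarith
  then show ?thesis
  proof cases
    case 1
    then show ?thesis
      using val \<open>A < B\<close> \<open>r > 0\<close> inner_region_sqrt_le[OF assms, of r] by (simp add: A_def)
  next
    case 2
    then have "t / r \<le> 1 + 2 * s / t"
      using \<open>r > 0\<close> middle_region_ratio_le[of s t r] assms by (simp add: A_def)
    then show ?thesis
      using val 2 \<open>r > 0\<close> mult_left_mono[of "t / r" _ "2 * pi"] by simp
  next
    case 3
    then have "mu_conv s \<xi> t = 2 * pi * ((t - r * sqrt (1 + 4 * s\<^sup>2 / (t\<^sup>2 - r\<^sup>2))) / r)"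
      using val \<open>A < B\<close> by simp
    also have "\<dots> \<le> 2 * pi * 1"
      using 3 \<open>r > 0\<close> outer_region_term_le[OF assms(2), of s r]
      by (intro mult_left_mono) (simp_all add: B_def)
    also have "\<dots> \<le> 2 * pi * (1 + 2 * s / t)"
      using assms by (intro mult_left_mono) auto
    finally show ?thesis .
  next
    case 4
    then show ?thesis
      using val \<open>A < B\<close> \<open>0 \<le> 2 * pi * (1 + 2 * s / t)\<close> by simp
  qed
qed

lemma SUP_mu_conv_bounds:
  fixes s t :: real
  assumes "s > 0" "t > 0"
  shows "2 * pi * sqrt (1 + 4 * s\<^sup>2 / t\<^sup>2) \<le> (SUP \<xi>::real^3. mu_conv s \<xi> t)"
    and "(SUP \<xi>::real^3. mu_conv s \<xi> t) \<le> 2 * pi * (1 + 2 * s / t)"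
proof -
  have "bdd_above (range (\<lambda>\<xi>::real^3. mu_conv s \<xi> t))"
    using mu_conv_le[OF assms] by (intro bdd_aboveI2)
  then have "mu_conv s 0 t \<le> (SUP \<xi>::real^3. mu_conv s \<xi> t)"
    by (rule cSUP_upper[OF UNIV_I])
  then show "2 * pi * sqrt (1 + 4 * s\<^sup>2 / t\<^sup>2) \<le> (SUP \<xi>::real^3. mu_conv s \<xi> t)"
    by (simp add: mu_conv_def)
  show "(SUP \<xi>::real^3. mu_conv s \<xi> t) \<le> 2 * pi * (1 + 2 * s / t)"
    using mu_conv_le[OF assms] by (intro cSUP_least) auto
qed

theorem lemma3p2:
  fixes s :: real
  assumes "s > 0"
  shows "(\<forall>\<tau>::real. \<tau> > 0 \<longrightarrow>
            2 * pi * sqrt (1 + 4 * s\<^sup>2 / \<tau>\<^sup>2) \<le> (SUP \<xi>::real^3. mu_conv s \<xi> \<tau>) \<and>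
            (SUP \<xi>::real^3. mu_conv s \<xi> \<tau>) \<le> 2 * pi * (1 + 2 * s / \<tau>))
         \<and> ((\<lambda>\<tau>. SUP \<xi>::real^3. mu_conv s \<xi> \<tau>) \<longlongrightarrow> 2 * pi) at_top"
proof (intro conjI allI impI)
  show "((\<lambda>\<tau>. SUP \<xi>::real^3. mu_conv s \<xi> \<tau>) \<longlongrightarrow> 2 * pi) at_top"
  proof (rule tendsto_sandwich)
    show "((\<lambda>t::real. 2 * pi * sqrt (1 + 4 * s\<^sup>2 / t\<^sup>2)) \<longlongrightarrow> 2 * pi) at_top"
      by real_asymp
    show "((\<lambda>t::real. 2 * pi * (1 + 2 * s / t)) \<longlongrightarrow> 2 * pi) at_top"
      by real_asymp
  qed (auto intro: eventually_mono[OF eventually_gt_at_top[of 0]] SUP_mu_conv_bounds[OF assms])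
qed (use SUP_mu_conv_bounds[OF assms] in auto)

end
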